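(* If $G$ is a graph with no component of order exactly $2$, then $\gamma(S_2(G))=\gamma_{\rm cer}(S_2(G))$.
   Context: All graphs are finite and simple. The $2$-subdivision $S_2(G)$ of $G$ is obtained from $G$ by replacing each edge $e=uv$ by a path $u,u_e,v_e,v$, where $u_e,v_e$ are two new vertices. A set $D\subseteq V_G$ is a dominating set of $G$ if every vertex of $V_G-D$ has a neighbor in $D$; $\gamma(G)$ is the minimum cardinality of a dominating set. A set $D\subseteq V_G$ is a certified dominating set of $G$ if $D$ is a dominating set of $G$ and every vertex of $D$ has either zero or at least two neighbors in $V_G-D$; $\gamma_{\rm cer}(G)$ is the minimum cardinality of a certified dominating set. *)

theory Defs
  imports Main
begin

definition graph :: "'a set \<Rightarrow> ('a \<Rightarrow> 'a \<Rightarrow> bool) \<Rightarrow> bool" where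
  "graph V E \<longleftrightarrow> finite V \<and> (\<forall>u v. E u v \<longrightarrow> u \<in> V \<and> v \<in> V \<and> u \<noteq> v \<and> E v u)"

definition component :: "'a set \<Rightarrow> ('a \<Rightarrow> 'a \<Rightarrow> bool) \<Rightarrow> 'a \<Rightarrow> 'a set" where
  "component V E v = {w \<in> V. E\<^sup>*\<^sup>* v w}"

text \<open>Vertices of the 2-subdivision: original vertices, and for every edge e = uv
  the new vertex u_e, represented as Sub u v (the new vertex next to u on e).\<close>
datatype 'a svert = Orig 'a | Sub 'a 'a

definition S2_V :: "'a set \<Rightarrow> ('a \<Rightarrow> 'a \<Rightarrow> bool) \<Rightarrow> 'a svert set" where
  "S2_V V E = Orig ` V \<union> {Sub u v | u v. E u v}"

fun S2_E :: "('a \<Rightarrow> 'a \<Rightarrow> bool) \<Rightarrow> 'a svert \<Rightarrow> 'a svert \<Rightarrow> bool" where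
  "S2_E E (Orig u) (Orig v) = False"
| "S2_E E (Orig u) (Sub a b) = (E a b \<and> a = u)"
| "S2_E E (Sub a b) (Orig u) = (E a b \<and> a = u)"
| "S2_E E (Sub a b) (Sub c d) = (E a b \<and> c = b \<and> d = a)"

definition dominating :: "'a set \<Rightarrow> ('a \<Rightarrow> 'a \<Rightarrow> bool) \<Rightarrow> 'a set \<Rightarrow> bool" where
  "dominating V E D \<longleftrightarrow> D \<subseteq> V \<and> (\<forall>v \<in> V - D. \<exists>u \<in> D. E v u)"

definition certified_dominating :: "'a set \<Rightarrow> ('a \<Rightarrow> 'a \<Rightarrow> bool) \<Rightarrow> 'a set \<Rightarrow> bool" where
  "certified_dominating V E D \<longleftrightarrow> dominating V E D \<and>
     (\<forall>v \<in> D. card {u \<in> V - D. E v u} = 0 \<or> card {u \<in> V - D. E v u} \<ge> 2)"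

definition domination_number :: "'a set \<Rightarrow> ('a \<Rightarrow> 'a \<Rightarrow> bool) \<Rightarrow> nat" where
  "domination_number V E = Min {card D | D. dominating V E D}"

definition cert_domination_number :: "'a set \<Rightarrow> ('a \<Rightarrow> 'a \<Rightarrow> bool) \<Rightarrow> nat" where
  "cert_domination_number V E = Min {card D | D. certified_dominating V E D}"

end

theory Submission
  imports Defs
begin

text \<open>Each original vertex u of S2(G) is dominated by itself or by a subdivision
  vertex u_e next to it, so sending every vertex of a dominating set to the original
  vertex it belongs to covers V; hence gamma(S2(G)) >= |V|, and V itself attains this.
  For a certified dominating set of the same size, replace every leaf u with unique
  edge e = uw by u_e. Then u_e has the two outside neighbours u and w_e, since w is
  not a leaf when no component has order 2, while a non-leaf u has exactly deg u
  outside neighbours, and deg u is 0 or at least 2.\<close>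

lemma graph_edgeD:
  assumes "graph V E" and "E u v"
  shows "u \<in> V" and "v \<in> V" and "u \<noteq> v" and "E v u"
  using assms unfolding graph_def by blast+

lemma Orig_in_S2_V [simp]: "Orig u \<in> S2_V V E \<longleftrightarrow> u \<in> V"
  by (auto simp: S2_V_def)

lemma Sub_in_S2_V [simp]: "Sub a b \<in> S2_V V E \<longleftrightarrow> E a b"
  by (auto simp: S2_V_def)

lemma S2_E_Orig_iff: "S2_E E (Orig u) x \<longleftrightarrow> (\<exists>w. E u w \<and> x = Sub u w)"
  by (cases x) auto

lemma finite_S2_V:
  assumes "graph V E" shows "finite (S2_V V E)"
proof -
  have "S2_V V E \<subseteq> Orig ` V \<union> case_prod Sub ` (V \<times> V)"
    using graph_edgeD[OF assms] unfolding S2_V_def by force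
  moreover have "finite V" using assms by (simp add: graph_def)
  ultimately show ?thesis by (auto intro: finite_subset)
qed

lemma Min_card_eqI:
  assumes "finite S" and "\<And>D. P D \<Longrightarrow> D \<subseteq> S"
    and "P D\<^sub>0" and "\<And>D. P D \<Longrightarrow> card D\<^sub>0 \<le> card D"
  shows "Min {card D | D. P D} = card D\<^sub>0"
proof (rule Min_eqI)
  have "{card D | D. P D} \<subseteq> {..card S}"
    using assms(1,2) by (auto intro: card_mono)
  then show "finite {card D | D. P D}" by (rule finite_subset) simp
qed (use assms(3,4) in auto)

lemma domination_number_eqI:
  assumes "finite V" and "dominating V E D\<^sub>0"
    and "\<And>D. dominating V E D \<Longrightarrow> card D\<^sub>0 \<le> card D"
  shows "domination_number V E = card D\<^sub>0"
  unfolding domination_number_def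
  by (rule Min_card_eqI[where P = "dominating V E", OF assms(1) _ assms(2,3)])
    (simp add: dominating_def)

lemma cert_domination_number_eqI:
  assumes "finite V" and "certified_dominating V E D\<^sub>0"
    and "\<And>D. certified_dominating V E D \<Longrightarrow> card D\<^sub>0 \<le> card D"
  shows "cert_domination_number V E = card D\<^sub>0"
  unfolding cert_domination_number_def
  by (rule Min_card_eqI[where P = "certified_dominating V E", OF assms(1) _ assms(2,3)])
    (simp add: certified_dominating_def dominating_def)

lemma card_le_dominating_S2:
  assumes "graph V E" and "dominating (S2_V V E) (S2_E E) D"
  shows "card V \<le> card D"
proof -
  define owner :: "'a svert \<Rightarrow> 'a" where
    "owner x = (case x of Orig u \<Rightarrow> u | Sub u _ \<Rightarrow> u)" for x
  have "finite D"
    using assms finite_S2_V finite_subset unfolding dominating_def by blast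
  have "V \<subseteq> owner ` D"
  proof
    fix u assume "u \<in> V"
    show "u \<in> owner ` D"
    proof (cases "Orig u \<in> D")
      case True
      then show ?thesis by (force simp: owner_def)
    next
      case False
      with \<open>u \<in> V\<close> have "Orig u \<in> S2_V V E - D" by simp
      with assms(2) obtain x where "x \<in> D" "S2_E E (Orig u) x"
        unfolding dominating_def by blast
      then show ?thesis by (force simp: S2_E_Orig_iff owner_def)
    qed
  qed
  then have "card V \<le> card (owner ` D)"
    using \<open>finite D\<close> by (simp add: card_mono)
  also have "\<dots> \<le> card D"
    using \<open>finite D\<close> by (rule card_image_le)
  finally show ?thesis .
qed

lemma dominating_Orig_image_S2:
  assumes "graph V E" shows "dominating (S2_V V E) (S2_E E) (Orig ` V)"
  unfolding dominating_def
proof (intro conjI ballI)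
  fix x assume "x \<in> S2_V V E - Orig ` V"
  then obtain a b where "x = Sub a b" "E a b" by (auto simp: S2_V_def)
  then show "\<exists>u \<in> Orig ` V. S2_E E x u"
    using graph_edgeD(1)[OF assms] by force
qed auto

lemma domination_number_S2:
  assumes "graph V E" shows "domination_number (S2_V V E) (S2_E E) = card V"
proof -
  have card_Orig: "card (Orig ` V) = card V" by (simp add: card_image inj_on_def)
  have "domination_number (S2_V V E) (S2_E E) = card (Orig ` V)"
    by (rule domination_number_eqI[OF finite_S2_V dominating_Orig_image_S2])
      (use assms card_le_dominating_S2[OF assms] card_Orig in auto)
  with card_Orig show ?thesis by simp
qed

definition nbhd :: "('a \<Rightarrow> 'a \<Rightarrow> bool) \<Rightarrow> 'a \<Rightarrow> 'a set" where
  "nbhd E u = {w. E u w}"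

lemma mem_nbhd_iff [simp]: "w \<in> nbhd E u \<longleftrightarrow> E u w"
  by (simp add: nbhd_def)

lemma finite_nbhd:
  assumes "graph V E" shows "finite (nbhd E u)"
proof (rule finite_subset)
  show "nbhd E u \<subseteq> V" using graph_edgeD(2)[OF assms] by (auto simp: nbhd_def)
  show "finite V" using assms by (simp add: graph_def)
qed

lemma nbhd_eq_singleton:
  assumes "card (nbhd E u) = 1" and "E u w"
  shows "nbhd E u = {w}"
  using assms by (metis card_1_singletonE mem_nbhd_iff singletonD)

lemma component_of_isolated_edge:
  assumes "graph V E" and "u \<in> V" and "nbhd E u = {w}" and "nbhd E w = {u}"
  shows "component V E u = {u, w}"
proof -
  have "E u w" using assms(3) by (metis mem_nbhd_iff singletonI)
  have "x \<in> {u, w}" if "E\<^sup>*\<^sup>* u x" for x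
    using that
  proof (induction rule: rtranclp_induct)
    case (step y z)
    then show ?case using assms(3,4) by (auto simp: nbhd_def)
  qed simp
  moreover have "w \<in> V" using graph_edgeD(2)[OF assms(1) \<open>E u w\<close>] .
  ultimately show ?thesis
    using \<open>u \<in> V\<close> \<open>E u w\<close> unfolding component_def by auto
qed

lemma leaf_neighbour_not_leaf:
  assumes "graph V E" and "\<forall>v \<in> V. card (component V E v) \<noteq> 2"
    and "u \<in> V" and "nbhd E u = {w}"
  shows "2 \<le> card (nbhd E w)"
proof -
  have "E u w" using assms(4) by (metis mem_nbhd_iff singletonI)
  then have "E w u" "u \<noteq> w" using graph_edgeD[OF assms(1)] by blast+
  then have "u \<in> nbhd E w" by simp
  then have "card (nbhd E w) \<noteq> 0"
    using finite_nbhd[OF assms(1)] by auto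
  moreover have "card (nbhd E w) \<noteq> 1"
  proof
    assume "card (nbhd E w) = 1"
    then have "nbhd E w = {u}" using \<open>E w u\<close> by (rule nbhd_eq_singleton)
    then have "card (component V E u) = 2"
      using component_of_isolated_edge[OF assms(1,3,4)] \<open>u \<noteq> w\<close> by simp
    with assms(2,3) show False by blast
  qed
  ultimately show ?thesis by linarith
qed

definition leaf_shift :: "('a \<Rightarrow> 'a \<Rightarrow> bool) \<Rightarrow> 'a \<Rightarrow> 'a svert" where
  "leaf_shift E u = (if card (nbhd E u) = 1 then Sub u (the_elem (nbhd E u)) else Orig u)"

lemma leaf_shift_leaf: "nbhd E u = {w} \<Longrightarrow> leaf_shift E u = Sub u w"
  by (simp add: leaf_shift_def)

lemma leaf_shift_eq_Orig_iff: "leaf_shift E u = Orig a \<longleftrightarrow> a = u \<and> card (nbhd E u) \<noteq> 1"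
  by (auto simp: leaf_shift_def)

lemma leaf_shift_eq_Sub_iff:
  "leaf_shift E u = Sub a b \<longleftrightarrow> a = u \<and> nbhd E u = {b}"
proof
  assume "leaf_shift E u = Sub a b"
  then have "card (nbhd E u) = 1" "a = u" "b = the_elem (nbhd E u)"
    by (auto simp: leaf_shift_def split: if_splits)
  then show "a = u \<and> nbhd E u = {b}" by (metis card_1_singletonE the_elem_eq)
qed (auto simp: leaf_shift_leaf)

lemma inj_leaf_shift: "inj (leaf_shift E)"
  by (rule injI) (auto simp: leaf_shift_def split: if_splits)

lemma leaf_shift_image_subset_S2_V:
  "leaf_shift E ` V \<subseteq> S2_V V E"
  by (auto simp: leaf_shift_def nbhd_def card_1_singleton_iff)

lemma dominating_leaf_shift_image:
  assumes "graph V E" shows "dominating (S2_V V E) (S2_E E) (leaf_shift E ` V)"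
  unfolding dominating_def
proof (intro conjI ballI leaf_shift_image_subset_S2_V)
  fix x assume x: "x \<in> S2_V V E - leaf_shift E ` V"
  show "\<exists>y \<in> leaf_shift E ` V. S2_E E x y"
  proof (cases x)
    case (Orig u)
    with x have "u \<in> V" by simp
    with x Orig have "leaf_shift E u \<noteq> Orig u" by (metis DiffD2 imageI)
    then have "card (nbhd E u) = 1" by (simp add: leaf_shift_eq_Orig_iff)
    then obtain w where "nbhd E u = {w}" by (auto simp: card_1_singleton_iff)
    then have "S2_E E x (leaf_shift E u)"
      using Orig by (simp add: leaf_shift_leaf) (metis mem_nbhd_iff singletonI)
    with \<open>u \<in> V\<close> show ?thesis by blast
  next
    case (Sub a b)
    with x have "E a b" by simp
    then have "a \<in> V" by (rule graph_edgeD(1)[OF assms])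
    have "card (nbhd E a) \<noteq> 1"
    proof
      assume "card (nbhd E a) = 1"
      then have "leaf_shift E a = x"
        using nbhd_eq_singleton \<open>E a b\<close> Sub leaf_shift_leaf by metis
      with x \<open>a \<in> V\<close> show False by blast
    qed
    then have "Orig a \<in> leaf_shift E ` V"
      using \<open>a \<in> V\<close> by (metis leaf_shift_eq_Orig_iff imageI)
    moreover have "S2_E E x (Orig a)" using Sub \<open>E a b\<close> by simp
    ultimately show ?thesis by blast
  qed
qed

lemma outside_neighbours_leaf_shift:
  assumes "graph V E" and "\<forall>v \<in> V. card (component V E v) \<noteq> 2" and "u \<in> V"
  defines "D \<equiv> leaf_shift E ` V"
  defines "N \<equiv> {x \<in> S2_V V E - D. S2_E E (leaf_shift E u) x}"
  shows "card N = 0 \<or> 2 \<le> card N"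
proof (cases "card (nbhd E u) = 1")
  case True
  then obtain w where w: "nbhd E u = {w}" by (auto simp: card_1_singleton_iff)
  then have "E u w" by (metis mem_nbhd_iff singletonI)
  then have "E w u" by (rule graph_edgeD(4)[OF assms(1)])
  have "Orig u \<notin> D"
    using True by (auto simp: D_def leaf_shift_eq_Orig_iff dest: sym)
  moreover have "Sub w u \<notin> D"
    using leaf_neighbour_not_leaf[OF assms(1-3) w]
    by (auto simp: D_def leaf_shift_eq_Sub_iff dest: sym)
  ultimately have "{Orig u, Sub w u} \<subseteq> N"
    using \<open>u \<in> V\<close> \<open>E u w\<close> \<open>E w u\<close> w by (simp add: N_def leaf_shift_leaf)
  moreover have "finite N"
    using finite_S2_V[OF assms(1)] by (simp add: N_def)
  ultimately have "card {Orig u, Sub w u} \<le> card N" by (rule card_mono[rotated])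
  then show ?thesis by simp
next
  case False
  then have "leaf_shift E u = Orig u" by (simp add: leaf_shift_def)
  moreover have "Sub u w \<notin> D" for w
    using False by (auto simp: D_def leaf_shift_eq_Sub_iff dest: sym)
  ultimately have "N = Sub u ` nbhd E u"
    by (auto simp: N_def S2_E_Orig_iff nbhd_def)
  then have "card N = card (nbhd E u)"
    by (simp add: card_image inj_on_def)
  with False show ?thesis by linarith
qed

lemma cert_domination_number_S2:
  assumes "graph V E" and "\<forall>v \<in> V. card (component V E v) \<noteq> 2"
  shows "cert_domination_number (S2_V V E) (S2_E E) = card V"
proof -
  have card_shift: "card (leaf_shift E ` V) = card V"
    by (rule card_image[OF inj_on_subset[OF inj_leaf_shift subset_UNIV]])
  have "certified_dominating (S2_V V E) (S2_E E) (leaf_shift E ` V)"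
    unfolding certified_dominating_def
  proof (intro conjI dominating_leaf_shift_image[OF assms(1)] ballI)
    fix v assume "v \<in> leaf_shift E ` V"
    then obtain u where "u \<in> V" "v = leaf_shift E u" by blast
    then show "card {x \<in> S2_V V E - leaf_shift E ` V. S2_E E v x} = 0 \<or>
        2 \<le> card {x \<in> S2_V V E - leaf_shift E ` V. S2_E E v x}"
      using outside_neighbours_leaf_shift[OF assms] by simp
  qed
  then have "cert_domination_number (S2_V V E) (S2_E E) = card (leaf_shift E ` V)"
    by (rule cert_domination_number_eqI[OF finite_S2_V[OF assms(1)]])
      (use card_shift card_le_dominating_S2[OF assms(1)] in \<open>auto simp: certified_dominating_def\<close>)
  with card_shift show ?thesis by simp
qed

theorem corollary2p14:
  fixes V :: "'a set" and E :: "'a \<Rightarrow> 'a \<Rightarrow> bool"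
  assumes "graph V E"
    and "\<forall>v \<in> V. card (component V E v) \<noteq> 2"
  shows "domination_number (S2_V V E) (S2_E E) = cert_domination_number (S2_V V E) (S2_E E)"
  using domination_number_S2[OF assms(1)] cert_domination_number_S2[OF assms] by simp

end
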